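(* Let $\{a_n\}_{n\ge1}$ be a monotone decreasing sequence of positive real numbers. Suppose that for $n\ge 2$ \[ \frac{a_{2n}}{a_n}=\frac12-\frac{\beta}{\ln n}+\frac{\gamma(n)}{(\ln n)^p}, \] where $p>1$, $\beta$ is a real constant independent of $n$, and $\gamma(n)$ is a bounded function of $n$. Then: (i) if $\beta>\frac{\ln2}{2}$, then $\sum_{n=1}^\infty a_n$ converges; (ii) if $\beta\le\frac{\ln2}{2}$, then $\sum_{n=1}^\infty a_n$ diverges.
   Context: Here $\ln$ denotes the natural logarithm. *)

theory Defs
  imports "HOL-Analysis.Analysis"
begin

end

theory Submission
  imports Defs "HOL-Real_Asymp.Real_Asymp"
begin

text \<open>Cauchy condensation replaces \<open>\<Sum> a\<^sub>n\<close> by \<open>\<Sum> b\<^sub>k\<close> with \<open>b\<^sub>k = 2\<^sup>k a(2\<^sup>k)\<close>, and the hypothesis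
  with \<open>n = 2\<^sup>k\<close> becomes a Gauss-type expansion
  \<open>b\<^sub>k\<^sub>+\<^sub>1 / b\<^sub>k = 1 - c/k + O(k\<^sup>-\<^sup>p)\<close> with \<open>c = 2\<beta> / ln 2\<close>.
  Raabe's test settles \<open>c \<noteq> 1\<close>; in the borderline case \<open>c = 1\<close> Kummer's test with the
  weights \<open>k ln k\<close>, whose reciprocals form Bertrand's divergent series, gives divergence.\<close>

lemma not_summable_inverse_mult_ln: "\<not> summable (\<lambda>n. inverse (real n * ln (real n)))"
proof
  assume summable: "summable (\<lambda>n. inverse (real n * ln (real n)))"
  \<comment> \<open>\<open>ln (2n)\<close> rather than \<open>ln n\<close>: condensation needs \<open>f\<close> decreasing from \<open>n = 1\<close> on\<close>
  define f where "f n = inverse (real n * ln (2 * real n))" for n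
  have "f (Suc m) \<le> f m" if "0 < m" for m
    unfolding f_def using that by (intro le_imp_inverse_le mult_mono) auto
  moreover have "f n \<ge> 0" for n
    unfolding f_def by (cases "n = 0") auto
  moreover have "summable f"
  proof (rule summable_comparison_test'[OF summable])
    fix n :: nat assume "n \<ge> 2"
    then show "norm (f n) \<le> inverse (real n * ln (real n))"
      unfolding f_def by (auto intro!: le_imp_inverse_le mult_mono)
  qed
  ultimately have "summable (\<lambda>n. 2 ^ n * f (2 ^ n))"
    using condensation_test[of f] by blast
  moreover have "2 ^ n * f (2 ^ n) = inverse (ln 2) * inverse (real (Suc n))" for n
  proof -
    have "ln (2 * 2 ^ n :: real) = real (Suc n) * ln 2"
      by (metis power_Suc ln_realpow)
    then show ?thesis
      unfolding f_def by (simp add: inverse_mult_distrib)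
  qed
  ultimately have "summable (\<lambda>n. inverse (real (Suc n)))"
    by simp
  then show False
    using not_summable_harmonic summable_Suc_iff by blast
qed

lemma bertrand_test:
  fixes b :: "nat \<Rightarrow> real" and c :: real
  assumes pos: "eventually (\<lambda>k. b k > 0) sequentially"
    and lim: "(\<lambda>k. ln (real k) * (real k * (b k / b (Suc k) - 1) - c)) \<longlonglongrightarrow> 0"
  shows "summable b \<longleftrightarrow> c > 1"
proof -
  define R where "R k = real k * (b k / b (Suc k) - 1)" for k
  have "(\<lambda>k. ln (real k) * (R k - c) * inverse (ln (real k))) \<longlonglongrightarrow> 0 * 0"
    unfolding R_def by (intro tendsto_mult[OF lim]) real_asymp
  moreover have "eventually (\<lambda>k. ln (real k) * (R k - c) * inverse (ln (real k)) = R k - c) sequentially"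
    using eventually_ge_at_top[of "2::nat"] by eventually_elim simp
  ultimately have "(\<lambda>k. R k - c + c) \<longlonglongrightarrow> 0 + c"
    by (intro tendsto_add tendsto_const) (simp add: tendsto_cong)
  then have "(\<lambda>k. ereal (R k)) \<longlonglongrightarrow> ereal c"
    by (intro tendsto_ereal) simp
  then have liminf: "liminf (\<lambda>k. ereal (R k)) = c" and limsup: "limsup (\<lambda>k. ereal (R k)) = c"
    by (simp_all add: lim_imp_Liminf lim_imp_Limsup)
  consider "c > 1" | "c < 1" | "c = 1"
    by linarith
  then show ?thesis
  proof cases
    case 1
    then show ?thesis
      using raabes_test_convergence[OF pos] liminf unfolding R_def by simp
  next
    case 2
    then show ?thesis
      using raabes_test_divergence[OF pos] limsup unfolding R_def by simp
  next
    case 3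
    define P where "P k = real k * ln (real k)" for k
    have P_pos: "eventually (\<lambda>k. P k > 0) sequentially"
      using eventually_ge_at_top[of "2::nat"] by eventually_elim (simp add: P_def)
    have P_divergent: "\<not> summable (\<lambda>k. inverse (P k))"
      unfolding P_def by (rule not_summable_inverse_mult_ln)
    have "P k * b k / b (Suc k) - P (Suc k)
        = ln (real k) * (R k - c) + (real k + 1) * (ln (real k) - ln (real k + 1))" for k
      using 3 unfolding P_def R_def by (simp add: algebra_simps)
    moreover have "(\<lambda>k. ln (real k) * (R k - c) + (real k + 1) * (ln (real k) - ln (real k + 1)))
        \<longlonglongrightarrow> 0 + -1"
      unfolding R_def by (intro tendsto_add[OF lim]) real_asymp
    ultimately have "(\<lambda>k. ereal (P k * b k / b (Suc k) - P (Suc k))) \<longlonglongrightarrow> ereal (-1)"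
      by (intro tendsto_ereal) simp
    from lim_imp_Limsup[OF sequentially_bot this]
    have "limsup (\<lambda>k. ereal (P k * b k / b (Suc k) - P (Suc k))) < 0"
      by simp
    then have "\<not> summable b"
      by (rule kummers_test_divergence[OF pos P_pos P_divergent])
    then show ?thesis
      using 3 by simp
  qed
qed

lemma bertrand_condition_of_ratio_expansion:
  fixes b e :: "nat \<Rightarrow> real" and c :: real
  assumes pos: "eventually (\<lambda>k. b k > 0) sequentially"
    and ratio: "eventually (\<lambda>k. b (Suc k) / b k = 1 - c / real k + e k) sequentially"
    and small: "(\<lambda>k. ln (real k) * (real k * e k)) \<longlonglongrightarrow> 0"
  shows "(\<lambda>k. ln (real k) * (real k * (b k / b (Suc k) - 1) - c)) \<longlonglongrightarrow> 0"
proof -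
  define r where "r k = b (Suc k) / b k" for k
  define \<delta> where "\<delta> k = ln (real k) * (real k * e k)" for k
  have \<delta>_lim: "\<delta> \<longlonglongrightarrow> 0"
    using small unfolding \<delta>_def .
  have pos_Suc: "eventually (\<lambda>k. b (Suc k) > 0) sequentially"
    using pos by (rule eventually_sequentially_Suc[THEN iffD2])
  have r_eq: "eventually (\<lambda>k. r k = 1 - c * inverse (real k) + \<delta> k * inverse (real k * ln (real k)))
      sequentially"
    using ratio eventually_ge_at_top[of "2::nat"]
    by eventually_elim (simp add: r_def \<delta>_def field_simps)
  have "(\<lambda>k. 1 - c * inverse (real k) + \<delta> k * inverse (real k * ln (real k))) \<longlonglongrightarrow> 1 - c * 0 + 0 * 0"
    by (intro tendsto_intros \<delta>_lim) real_asymp+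
  then have r_lim: "r \<longlonglongrightarrow> 1"
    using r_eq by (simp add: tendsto_cong)
  have "eventually (\<lambda>k. ln (real k) * (real k * (b k / b (Suc k) - 1) - c)
      = (c\<^sup>2 * (ln (real k) / real k) - (c * inverse (real k) + 1) * \<delta> k) / r k) sequentially"
    using pos pos_Suc ratio eventually_ge_at_top[of "2::nat"]
  proof eventually_elim
    case (elim k)
    define \<rho> where "\<rho> = 1 - c / real k + e k"
    have b_Suc: "b (Suc k) = \<rho> * b k"
      using elim(1,3) unfolding \<rho>_def by (simp add: divide_eq_eq)
    have "\<rho> > 0"
      using b_Suc elim(1,2) by (simp add: zero_less_mult_iff)
    moreover have e_eq: "e k = \<rho> - 1 + c / real k"
      unfolding \<rho>_def by simp
    ultimately show ?case
      unfolding r_def \<delta>_def b_Suc e_eq using elim(1,4)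
      by (simp add: field_simps power2_eq_square)
  qed
  moreover have "(\<lambda>k. (c\<^sup>2 * (ln (real k) / real k) - (c * inverse (real k) + 1) * \<delta> k) / r k)
      \<longlonglongrightarrow> (c\<^sup>2 * 0 - (c * 0 + 1) * 0) / 1"
    by (intro tendsto_intros \<delta>_lim r_lim) (simp | real_asymp)+
  ultimately show ?thesis
    by (simp add: tendsto_cong)
qed

lemma summable_iff_condensed:
  fixes a :: "nat \<Rightarrow> real"
  assumes nonneg: "\<And>n. n \<ge> 1 \<Longrightarrow> a n \<ge> 0"
    and mono: "\<And>m n. 1 \<le> m \<Longrightarrow> m \<le> n \<Longrightarrow> a n \<le> a m"
  shows "summable (\<lambda>n. a (n + 1)) \<longleftrightarrow> summable (\<lambda>k. 2 ^ k * a (2 ^ k))"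
proof -
  define f where "f n = (if n = 0 then 0 else a n)" for n
  have "summable (\<lambda>n. a (n + 1)) \<longleftrightarrow> summable (\<lambda>n. f (Suc n))"
    by (simp add: f_def)
  also have "\<dots> \<longleftrightarrow> summable f"
    by (rule summable_Suc_iff)
  also have "\<dots> \<longleftrightarrow> summable (\<lambda>k. 2 ^ k * f (2 ^ k))"
    by (rule condensation_test) (auto simp: f_def nonneg mono)
  finally show ?thesis
    by (simp add: f_def)
qed

lemma tendsto_ln_mult_bounded_div_powr:
  fixes g :: "nat \<Rightarrow> real" and C p :: real
  assumes bounded: "eventually (\<lambda>k. \<bar>g k\<bar> \<le> C) sequentially" and p: "p > 1"
  shows "(\<lambda>k. ln (real k) * (real k * (g k / real k powr p))) \<longlonglongrightarrow> 0"
proof (rule Lim_null_comparison)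
  show "eventually (\<lambda>k. norm (ln (real k) * (real k * (g k / real k powr p)))
      \<le> C * (ln (real k) * real k powr (1 - p))) sequentially"
    using bounded eventually_ge_at_top[of "1::nat"]
  proof eventually_elim
    case (elim k)
    have "norm (ln (real k) * (real k * (g k / real k powr p)))
        = \<bar>g k\<bar> * (ln (real k) * real k powr (1 - p))"
      using elim(2) by (simp add: abs_mult powr_diff)
    also have "\<dots> \<le> C * (ln (real k) * real k powr (1 - p))"
      using elim by (intro mult_right_mono) auto
    finally show ?case .
  qed
  show "(\<lambda>k. C * (ln (real k) * real k powr (1 - p))) \<longlonglongrightarrow> 0"
    using p by real_asymp
qed

lemma condensed_ratio_expansion:
  fixes a \<gamma> :: "nat \<Rightarrow> real" and \<beta> p :: real
  assumes pos: "\<And>n. n \<ge> 1 \<Longrightarrow> a n > 0"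
    and ratio: "\<And>n. n \<ge> 2 \<Longrightarrow>
        a (2 * n) / a n = 1 / 2 - \<beta> / ln (real n) + \<gamma> n / ln (real n) powr p"
  shows "eventually (\<lambda>k. 2 ^ Suc k * a (2 ^ Suc k) / (2 ^ k * a (2 ^ k))
      = 1 - (2 * \<beta> / ln 2) / real k + (2 * \<gamma> (2 ^ k) / ln 2 powr p) / real k powr p) sequentially"
  using eventually_ge_at_top[of "1::nat"]
proof eventually_elim
  case (elim k)
  have "(2::nat) \<le> 2 ^ k"
    using elim by (simp add: self_le_power)
  then have "2 ^ Suc k * a (2 ^ Suc k) / (2 ^ k * a (2 ^ k))
      = 1 - 2 * \<beta> / ln (real (2 ^ k)) + 2 * \<gamma> (2 ^ k) / ln (real (2 ^ k)) powr p"
    using pos[of "2 ^ k"] ratio[of "2 ^ k"] by (simp add: field_simps)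
  moreover have "ln (real (2 ^ k)) = real k * ln 2"
    by (simp add: ln_realpow)
  ultimately show ?case
    using elim by (simp add: powr_mult field_simps)
qed

theorem corollary2p1p2:
  fixes a :: "nat \<Rightarrow> real" and \<gamma> :: "nat \<Rightarrow> real" and \<beta> p :: real
  assumes pos: "\<And>n. n \<ge> 1 \<Longrightarrow> a n > 0"
    and mono: "\<And>m n. 1 \<le> m \<Longrightarrow> m \<le> n \<Longrightarrow> a n \<le> a m"
    and p: "p > 1"
    and bdd: "\<exists>C. \<forall>n\<ge>2. \<bar>\<gamma> n\<bar> \<le> C"
    and ratio: "\<And>n. n \<ge> 2 \<Longrightarrow>
        a (2 * n) / a n = 1 / 2 - \<beta> / ln (real n) + \<gamma> n / (ln (real n)) powr p"
  shows "(\<beta> > ln 2 / 2 \<longrightarrow> summable (\<lambda>n. a (n + 1)))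
       \<and> (\<beta> \<le> ln 2 / 2 \<longrightarrow> \<not> summable (\<lambda>n. a (n + 1)))"
proof -
  obtain C where C: "\<And>n. n \<ge> 2 \<Longrightarrow> \<bar>\<gamma> n\<bar> \<le> C"
    using bdd by blast
  define b where "b k = 2 ^ k * a (2 ^ k)" for k
  define c where "c = 2 * \<beta> / ln 2"
  define g where "g k = 2 * \<gamma> (2 ^ k) / ln 2 powr p" for k
  have b_pos: "eventually (\<lambda>k. b k > 0) sequentially"
    using pos by (simp add: b_def)
  have "eventually (\<lambda>k. b (Suc k) / b k = 1 - c / real k + g k / real k powr p) sequentially"
    using condensed_ratio_expansion[OF pos ratio] by (simp add: b_def c_def g_def)
  moreover have "eventually (\<lambda>k. \<bar>g k\<bar> \<le> 2 * C / ln 2 powr p) sequentially"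
    using eventually_ge_at_top[of "1::nat"]
  proof eventually_elim
    case (elim k)
    then have "(2::nat) \<le> 2 ^ k"
      by (simp add: self_le_power)
    then show ?case
      unfolding g_def using C by (simp add: abs_mult divide_right_mono)
  qed
  then have "(\<lambda>k. ln (real k) * (real k * (g k / real k powr p))) \<longlonglongrightarrow> 0"
    using p by (rule tendsto_ln_mult_bounded_div_powr)
  ultimately have "summable b \<longleftrightarrow> c > 1"
    by (intro bertrand_test[OF b_pos] bertrand_condition_of_ratio_expansion[OF b_pos])
  moreover have "summable (\<lambda>n. a (n + 1)) \<longleftrightarrow> summable b"
    unfolding b_def using pos mono by (intro summable_iff_condensed) (auto simp: less_imp_le)
  moreover have "c > 1 \<longleftrightarrow> \<beta> > ln 2 / 2"
    by (simp add: c_def field_simps)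
  ultimately show ?thesis
    by auto
qed

end
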